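(* Let $X=\{X(t),\ t\ge0\}$ and $Z=\{Z(t),\ t\ge0\}$ be stochastic processes such that $Z(t)$ is nondegenerate for every $t>0$, and suppose that for some positive constants $a_T$ with $a_T\to\infty$, $$\left\{\frac{X(Tt)}{a_T}\right\}_{t\ge0}\ \xrightarrow{fdd}\ \{Z(t)\}_{t\ge0}\quad\text{as } T\to\infty,$$ where $\xrightarrow{fdd}$ denotes convergence of all finite-dimensional distributions. Let $\mathcal{Q}$ be the set of $q\in\mathbb{R}$ such that $$\frac{\mathbb{E}|X(Tt)|^q}{a_T^q}\to\mathbb{E}|Z(t)|^q\quad\text{as }T\to\infty,\ \text{ for all } t\ge 0.$$ Then: (i) If $0<r<s$, $\mathbb{E}|Z(1)|^s<\infty$ and $s\in\mathcal{Q}$, then $r\in\mathcal{Q}$. (ii) If $s<r<0$, $\mathbb{E}|Z(1)|^s<\infty$ and $s\in\mathcal{Q}$, then $r\in\mathcal{Q}$. *)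

theory Defs
  imports "HOL-Probability.Probability"
begin

definition abs_pow :: "real \<Rightarrow> real \<Rightarrow> ennreal" where
  "abs_pow x q = (if x = 0 then (if q < 0 then \<infinity> else if q = 0 then 1 else 0)
                  else ennreal (\<bar>x\<bar> powr q))"

definition abs_moment :: "'a measure \<Rightarrow> ('a \<Rightarrow> real) \<Rightarrow> real \<Rightarrow> ennreal" where
  "abs_moment M Y q = (\<integral>\<^sup>+ \<omega>. abs_pow (Y \<omega>) q \<partial>M)"

definition nondegenerate :: "'a measure \<Rightarrow> ('a \<Rightarrow> real) \<Rightarrow> bool" where
  "nondegenerate M Y \<longleftrightarrow> \<not> (\<exists>c. AE \<omega> in M. Y \<omega> = c)"

text \<open>The law of an n-dimensional vector (Y_0,...,Y_{n-1}) is represented by the vector padded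
  with zeros in \<real>^\<nat> (product topology); weak convergence means convergence of expectations
  of every bounded continuous function.  Since padding is a closed embedding with
  continuous left inverse (the projection), this is exactly weak convergence in \<real>^n.\<close>
definition fdd_conv ::
  "'a measure \<Rightarrow> (real \<Rightarrow> 'a \<Rightarrow> real) \<Rightarrow> (real \<Rightarrow> real) \<Rightarrow> 'b measure \<Rightarrow> (real \<Rightarrow> 'b \<Rightarrow> real) \<Rightarrow> bool"
  where
  "fdd_conv M X a N Z \<longleftrightarrow>
    (\<forall>(n::nat) (t::nat \<Rightarrow> real) (g::(nat \<Rightarrow> real) \<Rightarrow> real).
       (\<forall>i<n. t i \<ge> 0) \<longrightarrow> continuous_on UNIV g \<longrightarrow> (\<exists>B. \<forall>y. \<bar>g y\<bar> \<le> B) \<longrightarrow>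
       ((\<lambda>T. \<integral>\<omega>. g (\<lambda>i. if i < n then X (T * t i) \<omega> / a T else 0) \<partial>M)
          \<longlongrightarrow> (\<integral>\<omega>. g (\<lambda>i. if i < n then Z (t i) \<omega> else 0) \<partial>N)) at_top)"

definition moment_conv_set ::
  "'a measure \<Rightarrow> (real \<Rightarrow> 'a \<Rightarrow> real) \<Rightarrow> (real \<Rightarrow> real) \<Rightarrow> 'b measure \<Rightarrow> (real \<Rightarrow> 'b \<Rightarrow> real) \<Rightarrow> real set"
  where
  "moment_conv_set M X a N Z = {q. \<forall>t\<ge>0.
     ((\<lambda>T. abs_moment M (X (T * t)) q / ennreal (a T powr q))
        \<longlongrightarrow> abs_moment N (Z t) q) at_top}"

end

theory Submission
  imports Defs
begin

text \<open>
  Write Y_T = X(Tt)/a_T. As min(|y|^r, K) is bounded and continuous, convergence in law gives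
  E min(|Y_T|^r, K) \<rightarrow> E min(|Z(t)|^r, K), and letting K \<rightarrow> \<infinity> yields the lower bound for the
  r-th moments. For the upper bound, s/r > 1 gives |y|^r \<le> min(|y|^r, K) + K^(1-s/r) |y|^s with
  K^(1-s/r) \<rightarrow> 0, so the convergent s-th moments make the untruncated part negligible, provided
  E|Z(t)|^s < \<infinity>. This is where nondegeneracy enters: if E|Z(t)|^s = \<infinity> for some t > 0 while
  E|Z(1)|^s < \<infinity>, comparing the s-th moments of X(Tt)/a_T and X(Tt)/a_(Tt) forces
  (a_(Tt)/a_T)^s \<rightarrow> \<infinity>. Then one of the two normalisations is the other divided by a factor tending
  to \<infinity>, so Z(1) or Z(t) vanishes almost surely. Likewise Z(0) = 0 almost surely since a_T \<rightarrow> \<infinity>.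
\<close>

lemma tendsto_top_if_mult_tendsto_top_ennreal:
  fixes c g :: "'x \<Rightarrow> ennreal"
  assumes "((\<lambda>x. c x * g x) \<longlongrightarrow> \<infinity>) F" "(g \<longlongrightarrow> A) F" "A < \<infinity>"
  shows "(c \<longlongrightarrow> \<infinity>) F"
  unfolding infinity_ennreal_def tendsto_top_iff_ennreal
proof (intro allI impI)
  fix l :: real assume l: "0 \<le> l"
  define B where "B = enn2real A + 1"
  have B: "A < ennreal B" "0 < B"
    using assms(3) by (cases A) (auto simp: B_def ennreal_less_iff add_nonneg_pos)
  have "eventually (\<lambda>x. g x < ennreal B) F"
    using assms(2) B(1) by (rule order_tendstoD(2))
  moreover have "eventually (\<lambda>x. ennreal (l * B) < c x * g x) F"
    using assms(1) l B(2) unfolding infinity_ennreal_def tendsto_top_iff_ennreal by simp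
  ultimately show "eventually (\<lambda>x. ennreal l < c x) F"
  proof eventually_elim
    case (elim x)
    show ?case
    proof (rule ccontr)
      assume "\<not> ennreal l < c x"
      then have "c x * g x \<le> ennreal l * ennreal B"
        using elim(1) by (intro mult_mono) auto
      with elim(2) l B(2) show False
        by (simp add: ennreal_mult)
    qed
  qed
qed

lemma filterlim_at_top_if_powr:
  fixes f :: "'x \<Rightarrow> real"
  assumes "filterlim (\<lambda>x. f x powr p) at_top F" "p > 0" "eventually (\<lambda>x. f x > 0) F"
  shows "filterlim f at_top F"
  unfolding filterlim_at_top
proof
  fix b :: real
  have "eventually (\<lambda>x. max b 1 powr p \<le> f x powr p) F"
    using assms(1) unfolding filterlim_at_top by blast
  with assms(3) show "eventually (\<lambda>x. b \<le> f x) F"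
  proof eventually_elim
    case (elim x)
    show ?case
    proof (rule ccontr)
      assume "\<not> b \<le> f x"
      then have "f x powr p < max b 1 powr p"
        using elim(1) assms(2) by (intro powr_less_mono2) auto
      with elim(2) show False by simp
    qed
  qed
qed

section \<open>Absolute powers and their truncations\<close>

lemma abs_pow_measurable [measurable]: "(\<lambda>x. abs_pow x q) \<in> borel_measurable borel"
  unfolding abs_pow_def by measurable

lemma abs_pow_mult:
  assumes "c > 0"
  shows "abs_pow (c * x) q = ennreal (c powr q) * abs_pow x q"
  using assms by (auto simp: abs_pow_def powr_mult abs_mult ennreal_mult ennreal_mult_top)

lemma abs_pow_divide:
  assumes "c > 0"
  shows "abs_pow (x / c) q = abs_pow x q / ennreal (c powr q)"
  using assms by (auto simp: abs_pow_def powr_divide divide_ennreal ennreal_top_divide)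

lemma abs_pow_le_truncation_plus:
  fixes r s K y :: real
  assumes rs: "1 < s / r" and K: "K > 0"
  shows "abs_pow y r \<le> min (abs_pow y r) (ennreal K) + ennreal (K powr (1 - s / r)) * abs_pow y s"
proof (cases "abs_pow y r \<le> ennreal K")
  case True
  then show ?thesis by (simp add: add_increasing2)
next
  case False
  have sign: "0 < r \<and> r < s \<or> s < r \<and> r < 0" and e: "1 - s / r < 0"
    using rs by (auto simp: less_divide_eq_1)
  show ?thesis
  proof (cases "y = 0")
    case True
    with False sign have "abs_pow y s = \<infinity>"
      by (auto simp: abs_pow_def split: if_splits)
    with K show ?thesis by (simp add: ennreal_mult_top)
  next
    case y: False
    with False K have less: "K < \<bar>y\<bar> powr r"
      by (simp add: abs_pow_def ennreal_less_iff)
    have "\<bar>y\<bar> powr r = (\<bar>y\<bar> powr r) powr (1 - s / r) * \<bar>y\<bar> powr s"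
      using sign by (auto simp: powr_powr algebra_simps simp flip: powr_add)
    also have "\<dots> \<le> K powr (1 - s / r) * \<bar>y\<bar> powr s"
      using e K less by (intro mult_right_mono powr_mono2') auto
    finally have "abs_pow y r \<le> ennreal (K powr (1 - s / r)) * abs_pow y s"
      using y by (simp add: abs_pow_def ennreal_leI flip: ennreal_mult)
    then show ?thesis by (simp add: add_increasing)
  qed
qed

text \<open>For q < 0 the cap is imposed on |y| powr -q, which makes the truncation continuous at 0,
  where abs_pow y q is infinite.\<close>
definition trunc_abs_pow :: "real \<Rightarrow> real \<Rightarrow> real \<Rightarrow> real" where
  "trunc_abs_pow q K y =
     (if 0 < q then min (\<bar>y\<bar> powr q) K else inverse (max (\<bar>y\<bar> powr (- q)) (inverse K)))"

lemma continuous_on_trunc_abs_pow: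
  assumes "q \<noteq> 0" "K > 0"
  shows "continuous_on UNIV (trunc_abs_pow q K)"
proof (cases "0 < q")
  case True
  then have "continuous_on UNIV (\<lambda>y::real. \<bar>y\<bar> powr q)"
    by (intro continuous_on_powr') (auto intro!: continuous_intros)
  with True show ?thesis
    unfolding trunc_abs_pow_def by (auto intro!: continuous_intros)
next
  case False
  with assms have "continuous_on UNIV (\<lambda>y::real. \<bar>y\<bar> powr (- q))"
    by (intro continuous_on_powr') (auto intro!: continuous_intros)
  moreover have "max (\<bar>y\<bar> powr (- q)) (inverse K) \<noteq> 0" for y
    using assms by (metis inverse_positive_iff_positive less_max_iff_disj order_less_irrefl)
  ultimately show ?thesis
    using False unfolding trunc_abs_pow_def by (auto intro!: continuous_intros)
qed

lemma trunc_abs_pow_nonneg: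
  assumes "K > 0"
  shows "0 \<le> trunc_abs_pow q K y"
  using assms by (auto simp: trunc_abs_pow_def le_max_iff_disj)

lemma trunc_abs_pow_le:
  assumes "K > 0"
  shows "trunc_abs_pow q K y \<le> K"
  using assms by (auto simp: trunc_abs_pow_def)
    (metis inverse_inverse_eq le_imp_inverse_le max.cobounded2 positive_imp_inverse_positive)

lemma ennreal_trunc_abs_pow:
  assumes "q \<noteq> 0" "K > 0"
  shows "ennreal (trunc_abs_pow q K y) = min (abs_pow y q) (ennreal K)"
proof (cases "0 < q \<or> y = 0")
  case True
  with assms show ?thesis
    by (auto simp: trunc_abs_pow_def abs_pow_def min_def ennreal_leI top_unique)
next
  case False
  with assms have "inverse (max (\<bar>y\<bar> powr (- q)) (inverse K)) = min (\<bar>y\<bar> powr q) K"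
    by (auto simp: powr_minus max_def min_def le_imp_inverse_le)
  with False assms show ?thesis
    by (simp add: trunc_abs_pow_def abs_pow_def min_ennreal)
qed

lemma abs_moment_divide:
  assumes "c > 0" "V \<in> borel_measurable M"
  shows "abs_moment M (\<lambda>\<omega>. V \<omega> / c) q = abs_moment M V q / ennreal (c powr q)"
  using assms unfolding abs_moment_def
  by (simp add: abs_pow_divide nn_integral_divide)

lemma abs_moment_mult:
  assumes "c > 0" "V \<in> borel_measurable M"
  shows "abs_moment M (\<lambda>\<omega>. c * V \<omega>) q = ennreal (c powr q) * abs_moment M V q"
  using assms unfolding abs_moment_def
  by (simp add: abs_pow_mult nn_integral_cmult)

lemma abs_moment_AE_eq_0:
  assumes "prob_space M" "AE \<omega> in M. W \<omega> = 0"
  shows "abs_moment M W q = abs_pow 0 q"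
proof -
  have "abs_moment M W q = (\<integral>\<^sup>+\<omega>. abs_pow 0 q \<partial>M)"
    unfolding abs_moment_def using assms(2) by (intro nn_integral_cong_AE) auto
  with assms(1) show ?thesis
    by (simp add: prob_space.emeasure_space_1)
qed

definition truncated_abs_moment :: "'a measure \<Rightarrow> ('a \<Rightarrow> real) \<Rightarrow> real \<Rightarrow> real \<Rightarrow> ennreal" where
  "truncated_abs_moment M V q K = (\<integral>\<^sup>+\<omega>. min (abs_pow (V \<omega>) q) (ennreal K) \<partial>M)"

lemma truncated_abs_moment_le: "truncated_abs_moment M V q K \<le> abs_moment M V q"
  unfolding truncated_abs_moment_def abs_moment_def by (intro nn_integral_mono) simp

lemma abs_moment_le_truncation_plus:
  assumes "1 < s / r" "K > 0" "V \<in> borel_measurable M"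
  shows "abs_moment M V r
    \<le> truncated_abs_moment M V r K + ennreal (K powr (1 - s / r)) * abs_moment M V s"
proof -
  have "abs_moment M V r \<le> (\<integral>\<^sup>+\<omega>. min (abs_pow (V \<omega>) r) (ennreal K)
      + ennreal (K powr (1 - s / r)) * abs_pow (V \<omega>) s \<partial>M)"
    unfolding abs_moment_def using assms(1,2)
    by (intro nn_integral_mono abs_pow_le_truncation_plus)
  also have "\<dots> = truncated_abs_moment M V r K + ennreal (K powr (1 - s / r)) * abs_moment M V s"
    unfolding abs_moment_def truncated_abs_moment_def using assms(3)
    by (simp add: nn_integral_add nn_integral_cmult)
  finally show ?thesis .
qed

section \<open>Convergence in law\<close>

definition converges_in_law ::
  "'x filter \<Rightarrow> 'a measure \<Rightarrow> ('x \<Rightarrow> 'a \<Rightarrow> real) \<Rightarrow> 'b measure \<Rightarrow> ('b \<Rightarrow> real) \<Rightarrow> bool" where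
  "converges_in_law F M Y N W \<longleftrightarrow>
    (\<forall>(h::real \<Rightarrow> real) B. continuous_on UNIV h \<longrightarrow> (\<forall>y. \<bar>h y\<bar> \<le> B) \<longrightarrow>
       ((\<lambda>x. \<integral>\<omega>. h (Y x \<omega>) \<partial>M) \<longlongrightarrow> (\<integral>\<omega>. h (W \<omega>) \<partial>N)) F)"

lemma converges_in_law_compose:
  assumes "converges_in_law F M Y N W" "filterlim g F G"
  shows "converges_in_law G M (\<lambda>x. Y (g x)) N W"
  using assms filterlim_compose unfolding converges_in_law_def by blast

lemma fdd_conv_imp_converges_in_law:
  assumes "fdd_conv M X a N Z" "t \<ge> 0"
  shows "converges_in_law at_top M (\<lambda>T \<omega>. X (T * t) \<omega> / a T) N (Z t)"
  unfolding converges_in_law_def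
proof (intro allI impI)
  fix h :: "real \<Rightarrow> real" and B
  assume h: "continuous_on UNIV h" "\<forall>y. \<bar>h y\<bar> \<le> B"
  have "continuous_on UNIV (\<lambda>y::nat \<Rightarrow> real. h (y 0))"
    by (rule continuous_on_compose2[OF h(1) continuous_on_product_coordinates]) auto
  moreover have "\<exists>B. \<forall>y::nat \<Rightarrow> real. \<bar>h (y 0)\<bar> \<le> B"
    using h(2) by blast
  ultimately show "((\<lambda>T. \<integral>\<omega>. h (X (T * t) \<omega> / a T) \<partial>M) \<longlongrightarrow> (\<integral>\<omega>. h (Z t \<omega>) \<partial>N)) at_top"
    using assms(1)[unfolded fdd_conv_def, rule_format, of 1 "\<lambda>_. t" "\<lambda>y. h (y 0)"] assms(2)
    by simp
qed

lemma converges_in_law_nn_integral: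
  assumes "finite_measure M" "finite_measure N" "converges_in_law F M Y N W"
    and "eventually (\<lambda>x. Y x \<in> borel_measurable M) F" "W \<in> borel_measurable N"
    and "continuous_on UNIV h" "\<And>y. 0 \<le> h y" "\<And>y. h y \<le> B"
  shows "((\<lambda>x. \<integral>\<^sup>+\<omega>. ennreal (h (Y x \<omega>)) \<partial>M) \<longlongrightarrow> (\<integral>\<^sup>+\<omega>. ennreal (h (W \<omega>)) \<partial>N)) F"
proof -
  have h_measurable: "h \<in> borel_measurable borel"
    using assms(6) by (rule borel_measurable_continuous_onI)
  have nn_integral_eq: "(\<integral>\<^sup>+\<omega>. ennreal (h (V \<omega>)) \<partial>P) = ennreal (\<integral>\<omega>. h (V \<omega>) \<partial>P)"
    if "finite_measure P" "V \<in> borel_measurable P" for P and V :: "_ \<Rightarrow> real"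
  proof (rule nn_integral_eq_integral)
    show "integrable P (\<lambda>\<omega>. h (V \<omega>))"
      using that assms(7,8) h_measurable
      by (intro finite_measure.integrable_const_bound[where B=B]) auto
  qed (use assms(7) in simp)
  have "((\<lambda>x. \<integral>\<omega>. h (Y x \<omega>) \<partial>M) \<longlongrightarrow> (\<integral>\<omega>. h (W \<omega>) \<partial>N)) F"
    using assms(3,6,7,8) unfolding converges_in_law_def by (metis abs_of_nonneg)
  then have "((\<lambda>x. ennreal (\<integral>\<omega>. h (Y x \<omega>) \<partial>M)) \<longlongrightarrow> (\<integral>\<^sup>+\<omega>. ennreal (h (W \<omega>)) \<partial>N)) F"
    using nn_integral_eq[OF assms(2,5)] by simp
  moreover have "eventually (\<lambda>x. ennreal (\<integral>\<omega>. h (Y x \<omega>) \<partial>M) = (\<integral>\<^sup>+\<omega>. ennreal (h (Y x \<omega>)) \<partial>M)) F"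
    using assms(4) by eventually_elim (simp add: nn_integral_eq[OF assms(1)])
  ultimately show ?thesis
    by (rule tendsto_cong[THEN iffD1, rotated])
qed

lemma converges_in_law_truncated_abs_moment:
  assumes "finite_measure M" "finite_measure N" "converges_in_law F M Y N W"
    and "eventually (\<lambda>x. Y x \<in> borel_measurable M) F" "W \<in> borel_measurable N"
    and "q \<noteq> 0" "K > 0"
  shows "((\<lambda>x. truncated_abs_moment M (Y x) q K) \<longlongrightarrow> truncated_abs_moment N W q K) F"
  using converges_in_law_nn_integral[OF assms(1-5) continuous_on_trunc_abs_pow[OF assms(6,7)]
      trunc_abs_pow_nonneg[OF assms(7)] trunc_abs_pow_le[OF assms(7)]]
  by (simp add: truncated_abs_moment_def ennreal_trunc_abs_pow[OF assms(6,7)])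

lemma integral_min_abs_divide_tendsto_0:
  fixes W :: "'a \<Rightarrow> real"
  assumes "finite_measure M" "W \<in> borel_measurable M"
  shows "((\<lambda>K. \<integral>\<omega>. min \<bar>W \<omega> / K\<bar> 1 \<partial>M) \<longlongrightarrow> 0) at_top"
proof -
  have "((\<lambda>K. \<integral>\<omega>. min \<bar>W \<omega> / K\<bar> 1 \<partial>M) \<longlongrightarrow> (\<integral>\<omega>. 0 \<partial>M)) at_top"
  proof (rule integral_dominated_convergence_at_top[where w = "\<lambda>_. 1" and f = "\<lambda>_. 0"
        and s = "\<lambda>K \<omega>. min \<bar>W \<omega> / K\<bar> 1"])
    show "AE \<omega> in M. ((\<lambda>K. min \<bar>W \<omega> / K\<bar> 1) \<longlongrightarrow> 0) at_top"
    proof (rule AE_I2)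
      fix \<omega>
      have "((\<lambda>K. W \<omega> / K) \<longlongrightarrow> 0) at_top"
        by (intro tendsto_divide_0[OF tendsto_const] filterlim_at_top_imp_at_infinity
            filterlim_ident)
      from tendsto_min[OF tendsto_rabs_zero[OF this] tendsto_const[of 1]]
      show "((\<lambda>K. min \<bar>W \<omega> / K\<bar> 1) \<longlongrightarrow> 0) at_top"
        by simp
    qed
  qed (use assms in \<open>auto simp: finite_measure.integrable_const\<close>)
  then show ?thesis by simp
qed

lemma AE_eq_0_if_converges_in_law_divide:
  fixes U V :: "'x \<Rightarrow> 'a \<Rightarrow> real" and \<rho> :: "'x \<Rightarrow> real"
  assumes "F \<noteq> bot" "finite_measure M" "finite_measure N" "finite_measure P"
    and "converges_in_law F M U P A" "converges_in_law F M V N B"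
    and "A \<in> borel_measurable P" "B \<in> borel_measurable N"
    and "eventually (\<lambda>x. U x \<in> borel_measurable M) F"
    and "filterlim \<rho> at_top F" "eventually (\<lambda>x. \<forall>\<omega>. V x \<omega> = U x \<omega> / \<rho> x) F"
  shows "AE \<omega> in N. B \<omega> = 0"
proof -
  have integrable: "integrable Q (\<lambda>\<omega>. min \<bar>Y \<omega> / K\<bar> (1::real))"
    if "finite_measure Q" "Y \<in> borel_measurable Q" for Q Y and K :: real
    using that by (intro finite_measure.integrable_const_bound[where B=1]) auto
  have law: "((\<lambda>x. \<integral>\<omega>. min \<bar>Y x \<omega> / K\<bar> 1 \<partial>M) \<longlongrightarrow> (\<integral>\<omega>. min \<bar>W \<omega> / K\<bar> 1 \<partial>Q)) F"
    if "converges_in_law F M Y Q W" for Q Y W and K :: real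
  proof -
    have "continuous_on UNIV (\<lambda>y::real. min \<bar>y / K\<bar> 1)"
      unfolding divide_inverse by (intro continuous_intros)
    with that show ?thesis
      unfolding converges_in_law_def
      by (elim allE[where x = "\<lambda>y. min \<bar>y / K\<bar> 1"] allE[where x = 1]) auto
  qed
  have le: "(\<integral>\<omega>. min \<bar>B \<omega> / 1\<bar> 1 \<partial>N) \<le> (\<integral>\<omega>. min \<bar>A \<omega> / K\<bar> 1 \<partial>P)" if K: "K > 0" for K
  proof (rule tendsto_le[OF assms(1) law[OF assms(5)] law[OF assms(6)]])
    show "eventually (\<lambda>x. (\<integral>\<omega>. min \<bar>V x \<omega> / 1\<bar> 1 \<partial>M) \<le> (\<integral>\<omega>. min \<bar>U x \<omega> / K\<bar> 1 \<partial>M)) F"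
      using assms(9,11) filterlim_at_top[THEN iffD1, OF assms(10), rule_format, of K]
    proof eventually_elim
      case (elim x)
      then have V: "V x = (\<lambda>\<omega>. U x \<omega> / \<rho> x)" by auto
      have "\<bar>U x \<omega>\<bar> / \<rho> x \<le> \<bar>U x \<omega>\<bar> / K" for \<omega>
        using elim(3) K by (intro divide_left_mono) auto
      with elim K show ?case
        unfolding V
        by (intro integral_mono integrable[OF assms(2)] min.mono) (auto simp: abs_divide)
    qed
  qed
  have "(\<integral>\<omega>. min \<bar>B \<omega> / 1\<bar> 1 \<partial>N) \<le> 0"
    using integral_min_abs_divide_tendsto_0[OF assms(4,7)]
  proof (rule tendsto_lowerbound)
    show "eventually (\<lambda>K. (\<integral>\<omega>. min \<bar>B \<omega> / 1\<bar> 1 \<partial>N) \<le> (\<integral>\<omega>. min \<bar>A \<omega> / K\<bar> 1 \<partial>P)) at_top"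
      using eventually_gt_at_top[of 0] by eventually_elim (rule le)
  qed simp
  then have "(\<integral>\<omega>. min \<bar>B \<omega>\<bar> 1 \<partial>N) = 0"
    by (simp add: antisym)
  then have "AE \<omega> in N. min \<bar>B \<omega>\<bar> (1::real) = 0"
    using integral_nonneg_eq_0_iff_AE[OF integrable[OF assms(3,8), of 1]] by simp
  then show ?thesis
    by eventually_elim (auto simp: min_def split: if_splits)
qed

lemma AE_eq_0_if_ratio_powr_tendsto_top:
  fixes U V :: "'x \<Rightarrow> 'a \<Rightarrow> real" and \<rho> :: "'x \<Rightarrow> real"
  assumes "F \<noteq> bot" "finite_measure M" "finite_measure P" "finite_measure Q"
    and U_law: "converges_in_law F M U P A" and V_law: "converges_in_law F M V Q B"
    and "A \<in> borel_measurable P" "B \<in> borel_measurable Q"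
    and "eventually (\<lambda>x. U x \<in> borel_measurable M \<and> V x \<in> borel_measurable M) F"
    and U_factor: "eventually (\<lambda>x. \<rho> x > 0 \<and> (\<forall>\<omega>. U x \<omega> = \<rho> x * V x \<omega>)) F"
    and \<rho>_powr: "filterlim (\<lambda>x. \<rho> x powr s) at_top F" and "s \<noteq> 0"
  shows "(AE \<omega> in Q. B \<omega> = 0) \<or> (AE \<omega> in P. A \<omega> = 0)"
proof (cases "s > 0")
  case True
  have "filterlim \<rho> at_top F"
    using \<rho>_powr True by (rule filterlim_at_top_if_powr) (use U_factor in \<open>auto elim: eventually_mono\<close>)
  moreover have "eventually (\<lambda>x. \<forall>\<omega>. V x \<omega> = U x \<omega> / \<rho> x) F"
    using U_factor by eventually_elim simp
  ultimately have "AE \<omega> in Q. B \<omega> = 0"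
    using assms(1-4,7-9) by (intro AE_eq_0_if_converges_in_law_divide[OF _ _ _ _ U_law V_law])
      (auto elim: eventually_mono)
  then show ?thesis ..
next
  case False
  have "eventually (\<lambda>x. \<rho> x powr s = (1 / \<rho> x) powr (- s)) F"
    using U_factor by eventually_elim (simp add: powr_divide powr_minus_divide)
  with \<rho>_powr have "filterlim (\<lambda>x. (1 / \<rho> x) powr (- s)) at_top F"
    by (simp add: filterlim_cong)
  then have "filterlim (\<lambda>x. 1 / \<rho> x) at_top F"
    by (rule filterlim_at_top_if_powr) (use False \<open>s \<noteq> 0\<close> U_factor in \<open>auto elim: eventually_mono\<close>)
  moreover have "eventually (\<lambda>x. \<forall>\<omega>. U x \<omega> = V x \<omega> / (1 / \<rho> x)) F"
    using U_factor by eventually_elim simp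
  ultimately have "AE \<omega> in P. A \<omega> = 0"
    using assms(1-4,7-9) by (intro AE_eq_0_if_converges_in_law_divide[OF _ _ _ _ V_law U_law])
      (auto elim: eventually_mono)
  then show ?thesis ..
qed

section \<open>Moment convergence at a smaller exponent\<close>

lemma abs_moment_eq_SUP_truncated:
  assumes "W \<in> borel_measurable M"
  shows "abs_moment M W q = (SUP n. truncated_abs_moment M W q (real n))"
proof -
  have "(SUP n. min x (of_nat n)) = (x :: ennreal)" for x
    unfolding inf_min[symmetric] inf_SUP[symmetric] ennreal_SUP_of_nat_eq_top by simp
  then have "abs_moment M W q = (\<integral>\<^sup>+\<omega>. (SUP n. min (abs_pow (W \<omega>) q) (of_nat n)) \<partial>M)"
    by (simp add: abs_moment_def)
  also have "\<dots> = (SUP n. \<integral>\<^sup>+\<omega>. min (abs_pow (W \<omega>) q) (of_nat n) \<partial>M)"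
    using assms by (intro nn_integral_monotone_convergence_SUP)
      (auto simp: incseq_def le_fun_def intro: min.coboundedI2 of_nat_mono)
  finally show ?thesis
    by (simp add: truncated_abs_moment_def ennreal_of_nat_eq_real_of_nat)
qed

lemma eventually_less_abs_moment:
  assumes "finite_measure M" "finite_measure N" "converges_in_law F M Y N W"
    and "eventually (\<lambda>x. Y x \<in> borel_measurable M) F" "W \<in> borel_measurable N"
    and "q \<noteq> 0" "l < abs_moment N W q"
  shows "eventually (\<lambda>x. l < abs_moment M (Y x) q) F"
proof -
  obtain n :: nat where n: "l < truncated_abs_moment N W q (real n)"
    using assms(7) by (auto simp: abs_moment_eq_SUP_truncated[OF assms(5)] less_SUP_iff)
  then have "n > 0"
    by (intro Nat.gr0I) (simp add: truncated_abs_moment_def)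
  then have "eventually (\<lambda>x. l < truncated_abs_moment M (Y x) q (real n)) F"
    using n converges_in_law_truncated_abs_moment[OF assms(1-6), of "real n"]
    by (auto dest: order_tendstoD(1))
  then show ?thesis
    by eventually_elim (rule less_le_trans[OF _ truncated_abs_moment_le])
qed

lemma eventually_abs_moment_less:
  assumes "finite_measure M" "finite_measure N" "converges_in_law F M Y N W"
    and "eventually (\<lambda>x. Y x \<in> borel_measurable M) F" "W \<in> borel_measurable N"
    and "1 < s / r" "((\<lambda>x. abs_moment M (Y x) s) \<longlongrightarrow> abs_moment N W s) F"
    and "abs_moment N W s < \<infinity>" "abs_moment N W r < u"
  shows "eventually (\<lambda>x. abs_moment M (Y x) r < u) F"
proof -
  define c where "c K = ennreal (K powr (1 - s / r))" for K
  have r: "r \<noteq> 0" and e: "1 - s / r < 0"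
    using assms(6) by auto
  have "((\<lambda>K. abs_moment N W r + c K * abs_moment N W s)
      \<longlongrightarrow> abs_moment N W r + ennreal 0 * abs_moment N W s) at_top"
    unfolding c_def using assms(8) e
    by (intro tendsto_intros tendsto_mult_ennreal tendsto_neg_powr filterlim_ident) auto
  then have "eventually (\<lambda>K. 0 < K \<and> abs_moment N W r + c K * abs_moment N W s < u) at_top"
    using assms(9) eventually_gt_at_top[of 0]
    by (auto dest: order_tendstoD(2) intro: eventually_conj)
  then obtain K where K: "K > 0" and less_u: "abs_moment N W r + c K * abs_moment N W s < u"
    using eventually_happens'[OF trivial_limit_at_top_linorder] by blast
  have "truncated_abs_moment N W r K + c K * abs_moment N W s < u"
    using less_u by (rule le_less_trans[rotated]) (intro add_right_mono truncated_abs_moment_le)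
  moreover have "((\<lambda>x. truncated_abs_moment M (Y x) r K + c K * abs_moment M (Y x) s)
      \<longlongrightarrow> truncated_abs_moment N W r K + c K * abs_moment N W s) F"
    unfolding c_def
    by (intro tendsto_add converges_in_law_truncated_abs_moment[OF assms(1-5) r K]
        ennreal_tendsto_cmult assms(7)) auto
  ultimately have
    "eventually (\<lambda>x. truncated_abs_moment M (Y x) r K + c K * abs_moment M (Y x) s < u) F"
    by (rule order_tendstoD(2)[rotated])
  with assms(4) show ?thesis
    unfolding c_def
    by eventually_elim (rule le_less_trans[OF abs_moment_le_truncation_plus[OF assms(6) K]])
qed

lemma tendsto_abs_moment_smaller_exponent:
  assumes "finite_measure M" "finite_measure N" "converges_in_law F M Y N W"
    and "eventually (\<lambda>x. Y x \<in> borel_measurable M) F" "W \<in> borel_measurable N"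
    and "1 < s / r" "((\<lambda>x. abs_moment M (Y x) s) \<longlongrightarrow> abs_moment N W s) F"
    and "abs_moment N W s < \<infinity> \<or> abs_moment N W r = \<infinity>"
  shows "((\<lambda>x. abs_moment M (Y x) r) \<longlongrightarrow> abs_moment N W r) F"
proof (rule order_tendstoI)
  show "eventually (\<lambda>x. l < abs_moment M (Y x) r) F" if "l < abs_moment N W r" for l
    using assms(6) by (intro eventually_less_abs_moment[OF assms(1-5) _ that]) auto
  show "eventually (\<lambda>x. abs_moment M (Y x) r < u) F" if "abs_moment N W r < u" for u
    using assms(8) that by (intro eventually_abs_moment_less[OF assms(1-7)]) auto
qed

section \<open>Rescaled processes\<close>

context
  fixes M :: "'a measure" and N :: "'b measure"
    and X :: "real \<Rightarrow> 'a \<Rightarrow> real" and Z :: "real \<Rightarrow> 'b \<Rightarrow> real"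
    and a :: "real \<Rightarrow> real"
  assumes prob_M: "prob_space M" and prob_N: "prob_space N"
    and X_measurable: "\<And>t. t \<ge> 0 \<Longrightarrow> X t \<in> borel_measurable M"
    and Z_measurable: "\<And>t. t \<ge> 0 \<Longrightarrow> Z t \<in> borel_measurable N"
    and Z_nondegenerate: "\<And>t. t > 0 \<Longrightarrow> nondegenerate N (Z t)"
    and a_pos: "\<And>T. T > 0 \<Longrightarrow> a T > 0"
    and a_tendsto: "filterlim a at_top at_top"
    and fdd: "fdd_conv M X a N Z"
begin

lemma finite_measure_M: "finite_measure M" and finite_measure_N: "finite_measure N"
  using prob_M prob_N by (auto intro: prob_space.axioms(1))

lemma X_divide_measurable: "T \<ge> 0 \<Longrightarrow> t \<ge> 0 \<Longrightarrow> (\<lambda>\<omega>. X (T * t) \<omega> / c) \<in> borel_measurable M"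
  using X_measurable by measurable

lemma moment_conv_set_iff:
  "q \<in> moment_conv_set M X a N Z \<longleftrightarrow>
     (\<forall>t\<ge>0. ((\<lambda>T. abs_moment M (\<lambda>\<omega>. X (T * t) \<omega> / a T) q) \<longlongrightarrow> abs_moment N (Z t) q) at_top)"
proof -
  have "((\<lambda>T. abs_moment M (X (T * t)) q / ennreal (a T powr q)) \<longlongrightarrow> L) at_top
    \<longleftrightarrow> ((\<lambda>T. abs_moment M (\<lambda>\<omega>. X (T * t) \<omega> / a T) q) \<longlongrightarrow> L) at_top" if "t \<ge> 0" for t L
  proof (intro tendsto_cong)
    show "eventually (\<lambda>T. abs_moment M (X (T * t)) q / ennreal (a T powr q)
        = abs_moment M (\<lambda>\<omega>. X (T * t) \<omega> / a T) q) at_top"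
      using eventually_gt_at_top[of 0]
      by eventually_elim (use that in \<open>simp add: abs_moment_divide a_pos X_measurable\<close>)
  qed
  then show ?thesis
    by (simp add: moment_conv_set_def)
qed

lemma AE_Z0_eq_0: "AE \<omega> in N. Z 0 \<omega> = 0"
proof (rule AE_eq_0_if_converges_in_law_divide)
  show "converges_in_law at_top M (\<lambda>_. X 0) M (X 0)"
    by (simp add: converges_in_law_def)
  show "converges_in_law at_top M (\<lambda>T \<omega>. X (T * 0) \<omega> / a T) N (Z 0)"
    using fdd by (rule fdd_conv_imp_converges_in_law) simp
qed (use finite_measure_M finite_measure_N a_tendsto X_measurable Z_measurable in auto)

lemma converges_in_law_self_scaled:
  assumes "t > 0"
  shows "converges_in_law at_top M (\<lambda>T \<omega>. X (T * t) \<omega> / a (T * t)) N (Z 1)"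
  using converges_in_law_compose[OF fdd_conv_imp_converges_in_law[OF fdd, of 1]
      filterlim_at_top_mult_tendsto_pos[OF tendsto_const assms filterlim_ident]]
  by simp

lemma scale_ratio_powr_tendsto_top:
  assumes s_conv: "s \<in> moment_conv_set M X a N Z" and Z1_finite: "abs_moment N (Z 1) s < \<infinity>"
    and t: "t > 0" and Zt_infinite: "abs_moment N (Z t) s = \<infinity>"
  shows "filterlim (\<lambda>T. (a (T * t) / a T) powr s) at_top at_top"
proof -
  have "((\<lambda>T. abs_moment M (\<lambda>\<omega>. X (T * 1) \<omega> / a T) s) \<longlongrightarrow> abs_moment N (Z 1) s) at_top"
    using s_conv unfolding moment_conv_set_iff by (auto dest: spec[of _ 1])
  from filterlim_compose[OF this filterlim_at_top_mult_tendsto_pos[OF tendsto_const t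
      filterlim_ident]]
  have self_scaled:
    "((\<lambda>T. abs_moment M (\<lambda>\<omega>. X (T * t) \<omega> / a (T * t)) s) \<longlongrightarrow> abs_moment N (Z 1) s) at_top"
    by simp
  have "((\<lambda>T. abs_moment M (\<lambda>\<omega>. X (T * t) \<omega> / a T) s) \<longlongrightarrow> \<infinity>) at_top"
    using s_conv t unfolding moment_conv_set_iff Zt_infinite[symmetric] by simp
  moreover have "eventually (\<lambda>T. abs_moment M (\<lambda>\<omega>. X (T * t) \<omega> / a T) s
      = ennreal ((a (T * t) / a T) powr s) * abs_moment M (\<lambda>\<omega>. X (T * t) \<omega> / a (T * t)) s) at_top"
    using eventually_gt_at_top[of 0]
  proof eventually_elim
    case (elim T)
    with t have "a T > 0" "a (T * t) > 0"
      by (simp_all add: a_pos)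
    then have "abs_moment M (\<lambda>\<omega>. X (T * t) \<omega> / a T) s
        = abs_moment M (\<lambda>\<omega>. a (T * t) / a T * (X (T * t) \<omega> / a (T * t))) s"
      by (intro arg_cong[where f = "\<lambda>f. abs_moment M f s"]) auto
    also have "\<dots>
        = ennreal ((a (T * t) / a T) powr s) * abs_moment M (\<lambda>\<omega>. X (T * t) \<omega> / a (T * t)) s"
      using \<open>a T > 0\<close> \<open>a (T * t) > 0\<close> elim t
      by (intro abs_moment_mult) (simp_all add: X_divide_measurable)
    finally show ?case .
  qed
  ultimately have "((\<lambda>T. ennreal ((a (T * t) / a T) powr s)
      * abs_moment M (\<lambda>\<omega>. X (T * t) \<omega> / a (T * t)) s) \<longlongrightarrow> \<infinity>) at_top"
    by (simp add: tendsto_cong)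
  then show ?thesis
    using tendsto_top_if_mult_tendsto_top_ennreal[OF _ self_scaled Z1_finite]
    by (simp flip: ennreal_tendsto_top_eq_at_top)
qed

lemma abs_moment_Z_finite:
  assumes s: "s \<noteq> 0" and s_conv: "s \<in> moment_conv_set M X a N Z"
    and Z1_finite: "abs_moment N (Z 1) s < \<infinity>" and t: "t > 0"
  shows "abs_moment N (Z t) s < \<infinity>"
proof (rule ccontr)
  assume "\<not> abs_moment N (Z t) s < \<infinity>"
  then have "abs_moment N (Z t) s = \<infinity>"
    by (metis infinity_ennreal_def top.not_eq_extremum)
  with s_conv Z1_finite t
  have ratio: "filterlim (\<lambda>T. (a (T * t) / a T) powr s) at_top at_top"
    by (rule scale_ratio_powr_tendsto_top)
  have measurable: "eventually (\<lambda>T. (\<lambda>\<omega>. X (T * t) \<omega> / a T) \<in> borel_measurable M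
      \<and> (\<lambda>\<omega>. X (T * t) \<omega> / a (T * t)) \<in> borel_measurable M) at_top"
    using eventually_gt_at_top[of 0]
    by eventually_elim (simp add: X_divide_measurable t less_imp_le)
  have factor: "eventually (\<lambda>T. a (T * t) / a T > 0
      \<and> (\<forall>\<omega>. X (T * t) \<omega> / a T = a (T * t) / a T * (X (T * t) \<omega> / a (T * t)))) at_top"
    using eventually_gt_at_top[of 0]
  proof eventually_elim
    case (elim T)
    with t have "a T > 0" "a (T * t) > 0"
      by (simp_all add: a_pos)
    then show ?case
      by simp
  qed
  have "(AE \<omega> in N. Z 1 \<omega> = 0) \<or> (AE \<omega> in N. Z t \<omega> = 0)"
    by (rule AE_eq_0_if_ratio_powr_tendsto_top[OF trivial_limit_at_top_linorder
        finite_measure_M finite_measure_N finite_measure_N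
        fdd_conv_imp_converges_in_law[OF fdd less_imp_le[OF t]] converges_in_law_self_scaled[OF t]
        Z_measurable[OF less_imp_le[OF t]] Z_measurable[OF zero_le_one] measurable factor ratio s])
  with Z_nondegenerate[of 1] Z_nondegenerate[OF t] show False
    unfolding nondegenerate_def by auto
qed

lemma moment_conv_set_smaller_exponent:
  assumes rs: "1 < s / r" and Z1_finite: "abs_moment N (Z 1) s < \<infinity>"
    and s_conv: "s \<in> moment_conv_set M X a N Z"
  shows "r \<in> moment_conv_set M X a N Z"
  unfolding moment_conv_set_iff
proof (intro allI impI)
  fix t :: real assume t: "t \<ge> 0"
  have sign: "0 < r \<and> r < s \<or> s < r \<and> r < 0"
    using rs by (auto simp: less_divide_eq_1)
  txt \<open>For s < 0 the s-th moment of Z 0 = 0 is infinite, but then so is the r-th.\<close>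
  have "abs_moment N (Z t) s < \<infinity> \<or> abs_moment N (Z t) r = \<infinity>"
  proof (cases "t = 0")
    case True
    with sign show ?thesis
      by (auto simp: abs_moment_AE_eq_0[OF prob_N AE_Z0_eq_0] abs_pow_def)
  next
    case False
    with t sign show ?thesis
      using abs_moment_Z_finite[OF _ s_conv Z1_finite] by auto
  qed
  moreover have "eventually (\<lambda>T. (\<lambda>\<omega>. X (T * t) \<omega> / a T) \<in> borel_measurable M) at_top"
    using eventually_gt_at_top[of 0] by eventually_elim (simp add: X_divide_measurable t)
  ultimately show "((\<lambda>T. abs_moment M (\<lambda>\<omega>. X (T * t) \<omega> / a T) r) \<longlongrightarrow> abs_moment N (Z t) r) at_top"
    using s_conv t unfolding moment_conv_set_iff
    by (intro tendsto_abs_moment_smaller_exponent[OF finite_measure_M finite_measure_N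
          fdd_conv_imp_converges_in_law[OF fdd t] _ Z_measurable[OF t] rs]) auto
qed

end

theorem proposition2p2:
  fixes M :: "'a measure" and N :: "'b measure"
    and X :: "real \<Rightarrow> 'a \<Rightarrow> real" and Z :: "real \<Rightarrow> 'b \<Rightarrow> real"
    and a :: "real \<Rightarrow> real"
  assumes "prob_space M" and "prob_space N"
    and "\<And>t. t \<ge> 0 \<Longrightarrow> X t \<in> borel_measurable M"
    and "\<And>t. t \<ge> 0 \<Longrightarrow> Z t \<in> borel_measurable N"
    and "\<And>t. t > 0 \<Longrightarrow> nondegenerate N (Z t)"
    and "\<And>T. T > 0 \<Longrightarrow> a T > 0"
    and "filterlim a at_top at_top"
    and "fdd_conv M X a N Z"
  shows "(\<forall>r s. 0 < r \<and> r < s \<and> abs_moment N (Z 1) s < \<infinity> \<and> s \<in> moment_conv_set M X a N Z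
              \<longrightarrow> r \<in> moment_conv_set M X a N Z)
       \<and> (\<forall>r s. s < r \<and> r < 0 \<and> abs_moment N (Z 1) s < \<infinity> \<and> s \<in> moment_conv_set M X a N Z
              \<longrightarrow> r \<in> moment_conv_set M X a N Z)"
  using moment_conv_set_smaller_exponent[OF assms] by (auto simp: less_divide_eq_1)

end
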